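(* Let $\mathcal T=(S,\Sigma,\kappa)$ be an STS, let $B\in\Sigma$, let $n\ge0$ and $\mathcal A=(A_0,\dots,A_n)\in\Sigma^{n+1}$, and let $p>0$. Assume that for every $\nu\in\mathrm{Dist}(S)$ such that $\nu_{\mathcal A}$ is well-defined, $\mathbb P^{\mathcal T}_{\nu_{\mathcal A}}(\mathbf F B)\ge p$. Then for every $\mu\in\mathrm{Dist}(S)$, $$\mathbb P^{\mathcal T}_\mu(\mathbf G\overline B\wedge\mathbf{GF}\phi_{\mathcal A})=0.$$ (In particular, for $n=0$ and $\mathcal A=(A)$: if $\mathbb P^{\mathcal T}_{\delta_s}(\mathbf F B)\ge p$ for all $s\in A$, then $\mathbb P^{\mathcal T}_\mu(\mathbf G\overline B\wedge\mathbf{GF}A)=0$ for all $\mu$.)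
   Context: A stochastic transition system (STS) is a triple $\mathcal T=(S,\Sigma,\kappa)$ where $(S,\Sigma)$ is a measurable space and $\kappa:S\times\Sigma\to[0,1]$ is a Markov kernel. $\mathrm{Dist}(S)$ is the set of probability distributions on $(S,\Sigma)$, $\delta_s$ the Dirac distribution at $s$. Runs are elements of $S^\omega$; $\mathrm{Cyl}(A_0,\dots,A_k)=\{s_0s_1\ldots: s_j\in A_j,\ 0\le j\le k\}$; $\mathbb P^{\mathcal T}_\mu$ is the probability measure on runs (with the $\sigma$-algebra generated by cylinders) induced by initial distribution $\mu$ and kernel $\kappa$. For a run $\rho=s_0s_1\ldots$, $\rho_{\ge k}=s_ks_{k+1}\ldots$. Notation: $\overline B=S\setminus B$; $\mathbf F B$ is the set of runs visiting $B$ at some step; $\mathbf G B$ the set of runs all of whose states lie in $B$; $\mathbf{GF}B$ the set of runs visiting $B$ infinitely often. For $\mathcal A=(A_0,\dots,A_n)\in\Sigma^{n+1}$, $\phi_{\mathcal A}$ is the set of runs $\rho$ with $s_j\in A_j$ for $0\le j\le n$, and $\mathbf{GF}\phi_{\mathcal A}$ is the set of runs $\rho$ such that $\rho_{\ge k}\in\phi_{\mathcal A}$ for infinitely many $k$. Conditional distribution: for $\nu\in\mathrm{Dist}(S)$ with $\mathbb P^{\mathcal T}_\nu(\mathrm{Cyl}(A_0,\dots,A_n))>0$, $\nu_{\mathcal A}$ is said to be well-defined and is the distribution $C\mapsto \mathbb P^{\mathcal T}_\nu(\mathrm{Cyl}(A_0,\dots,A_{n-1},A_n\cap C))/\mathbb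 P^{\mathcal T}_\nu(\mathrm{Cyl}(A_0,\dots,A_n))$ (the distribution of the state at step $n$ conditioned on $\phi_{\mathcal A}$); for a single set $A$ with $\nu(A)>0$, $\nu_A=\nu(\cdot\cap A)/\nu(A)$. *)

theory Defs
  imports "HOL-Probability.Probability"
begin

definition cyl :: "'a measure \<Rightarrow> 'a set list \<Rightarrow> 'a stream set" where
  "cyl M As = {\<omega> \<in> space (stream_space M). \<forall>j < length As. \<omega> !! j \<in> As ! j}"

text \<open>Iterated kernel integral: cyl_fun K [A_0,...,A_k] s is the probability, starting in
  state s, of the cylinder Cyl(A_0,...,A_k).\<close>
fun cyl_fun :: "('a \<Rightarrow> 'a measure) \<Rightarrow> 'a set list \<Rightarrow> 'a \<Rightarrow> ennreal" where
  "cyl_fun K [] s = 1"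
| "cyl_fun K (A # As) s = indicator A s * (\<integral>\<^sup>+ t. cyl_fun K As t \<partial>K s)"

text \<open>P is the run-measure operator of the STS (M, K): for every initial distribution mu,
  P mu is a probability measure on runs (product sigma algebra = generated by cylinders)
  whose cylinder probabilities are those induced by mu and the kernel K.\<close>
definition is_path_measure :: "'a measure \<Rightarrow> ('a \<Rightarrow> 'a measure) \<Rightarrow> ('a measure \<Rightarrow> 'a stream measure) \<Rightarrow> bool" where
  "is_path_measure M K P \<longleftrightarrow>
     (\<forall>\<mu> \<in> space (prob_algebra M).
        P \<mu> \<in> space (prob_algebra (stream_space M)) \<and>
        (\<forall>As. set As \<subseteq> sets M \<longrightarrow> emeasure (P \<mu>) (cyl M As) = (\<integral>\<^sup>+ s. cyl_fun K As s \<partial>\<mu>)))"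

text \<open>Conditional distribution nu_A: distribution of the state at step n = length As - 1
  under P nu conditioned on the cylinder phi_A.\<close>
definition cond_dist :: "'a measure \<Rightarrow> ('a measure \<Rightarrow> 'a stream measure) \<Rightarrow> 'a set list \<Rightarrow> 'a measure \<Rightarrow> 'a measure" where
  "cond_dist M P As \<nu> = distr (uniform_measure (P \<nu>) (cyl M As)) M (\<lambda>\<omega>. \<omega> !! (length As - 1))"

definition runs_F :: "'a measure \<Rightarrow> 'a set \<Rightarrow> 'a stream set" where
  "runs_F M B = {\<omega> \<in> space (stream_space M). \<exists>k. \<omega> !! k \<in> B}"

definition runs_G :: "'a measure \<Rightarrow> 'a set \<Rightarrow> 'a stream set" where
  "runs_G M B = {\<omega> \<in> space (stream_space M). \<forall>k. \<omega> !! k \<in> B}"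

definition runs_GF_phi :: "'a measure \<Rightarrow> 'a set list \<Rightarrow> 'a stream set" where
  "runs_GF_phi M As = {\<omega> \<in> space (stream_space M). \<exists>\<^sub>\<infinity>k. sdrop k \<omega> \<in> cyl M As}"

end

theory Submission
  imports Defs
begin

(* Split the time axis into the residue classes modulo L = length As: occurrences of phi_A
  that start at the slots r, r + L, r + 2 L, ... of one class never overlap.  Fix r and m and
  sort the runs that avoid B until some slot i >= m carrying an occurrence by the first such
  slot.  That event is determined by the states before time r + i L, so by the Markov property
  the run continues from its state at that time, and the hypothesis, applied to the state at the
  end of the occurrence conditioned on phi_A, bounds the probability of avoiding B forever by
  1 - p.  Summing over i, the runs that avoid B and have infinitely many occurrences in class r
  have probability at most 1 - p times that of the event "some occurrence in class r at a slot
  >= m, with B avoided before the first one".  These events decrease in m to the runs in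
  question, which therefore form a null set; the finitely many classes r together cover every
  run with infinitely many occurrences. *)

section \<open>Cylinders of runs\<close>

lemma cyl_eq_scylinder: "cyl M As = scylinder (space M) As"
proof (induction As)
  case Nil
  then show ?case by (simp add: cyl_def space_stream_space)
next
  case (Cons A As)
  have "\<omega> \<in> cyl M (A # As) \<longleftrightarrow> \<omega> \<in> streams (space M) \<and> shd \<omega> \<in> A \<and> stl \<omega> \<in> cyl M As" for \<omega>
    by (auto simp: cyl_def space_stream_space All_less_Suc2 streams_stl)
  then show ?case
    using Cons.IH by auto
qed

lemma sets_cyl [measurable]: "set As \<subseteq> sets M \<Longrightarrow> cyl M As \<in> sets (stream_space M)"
  unfolding cyl_eq_scylinder by (rule sets_scylinder) auto

lemma cyl_subset_space: "cyl M As \<subseteq> space (stream_space M)"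
  by (auto simp: cyl_def)

lemma cyl_Nil: "cyl M [] = space (stream_space M)"
  by (simp add: cyl_def)

lemma cyl_snoc: "cyl M (Cs @ [D]) = cyl M Cs \<inter> {\<omega> \<in> space (stream_space M). \<omega> !! length Cs \<in> D}"
  by (auto simp: cyl_def nth_append less_Suc_eq)

lemma sdrop_in_runs_G: "\<omega> \<in> runs_G M X \<Longrightarrow> sdrop k \<omega> \<in> runs_G M X"
  by (auto simp: runs_G_def space_stream_space sdrop_snth streams_iff_snth)

lemma Int_stable_scylinder: "Int_stable (scylinder (space M) ` lists (sets M))"
proof (rule Int_stableI_image)
  fix xs ys assume "xs \<in> lists (sets M)" "ys \<in> lists (sets M)"
  then show "\<exists>zs\<in>lists (sets M). scylinder (space M) xs \<inter> scylinder (space M) ys = scylinder (space M) zs"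
  proof (induction xs arbitrary: ys)
    case Nil
    then show ?case by (auto simp: Int_absorb1 scylinder_streams)
  next
    case (Cons x xs)
    show ?case
    proof (cases ys)
      case Nil
      with Cons.hyps show ?thesis
        by (auto simp: Int_absorb2 scylinder_streams intro!: bexI[of _ "x # xs"])
    next
      case (Cons y ys')
      with Cons.IH[of ys'] Cons.prems obtain zs where "zs \<in> lists (sets M)"
        and "scylinder (space M) xs \<inter> scylinder (space M) ys' = scylinder (space M) zs"
        by auto
      with Cons Cons.prems \<open>x \<in> sets M\<close> show ?thesis
        by (intro bexI[of _ "(x \<inter> y) # zs"]) auto
    qed
  qed
qed

lemma sets_stream_space_eq_sigma_scylinder:
  "sets (stream_space M) = sigma_sets (streams (space M)) (scylinder (space M) ` lists (sets M))"
proof -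
  let ?G = "scylinder (space M) ` lists (sets M)"
  have G_Pow: "?G \<subseteq> Pow (streams (space M))"
    using scylinder_streams by auto
  have "sets (stream_space M) = sets (sigma (streams (space M)) ?G)"
  proof (rule antisym)
    show "sets (stream_space M) \<subseteq> sets (sigma (streams (space M)) ?G)"
      unfolding sets_stream_space_eq
    proof (safe intro!: sets_Sup_in_sets del: subsetI equalityI)
      fix i :: nat
      show "space (vimage_algebra (streams (space M)) (\<lambda>s. s !! i) M) = space (sigma (streams (space M)) ?G)"
        using scylinder_streams by (subst space_measure_of) auto
      have snth_vimage: "(\<lambda>s. s !! i) -` A \<inter> streams (space M) \<in> sets (sigma (streams (space M)) ?G)"
        if "A \<in> sets M" for A
      proof -
        have "scylinder (space M) (replicate i (space M) @ [A]) = (\<lambda>s. s !! i) -` A \<inter> streams (space M)"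
          by (induction i) (auto simp: streams_shd streams_stl cong: conj_cong)
        moreover have "scylinder (space M) (replicate i (space M) @ [A]) \<in> ?G"
          using that by auto
        ultimately show ?thesis
          using G_Pow by (metis in_measure_of)
      qed
      have "sets M = sets (sigma (space M) (sets M))"
        by (simp add: sets.sigma_sets_eq)
      then have vimage_eq: "vimage_algebra (streams (space M)) (\<lambda>s. s !! i) M =
          sigma (streams (space M)) {(\<lambda>s. s !! i) -` A \<inter> streams (space M) | A. A \<in> sets M}"
        by (subst vimage_algebra_cong[OF refl refl], assumption)
          (auto intro!: vimage_algebra_sigma sets.space_closed simp: streams_iff_snth)
      show "sets (vimage_algebra (streams (space M)) (\<lambda>s. s !! i) M) \<subseteq> sets (sigma (streams (space M)) ?G)"
        unfolding vimage_eq using snth_vimage by (subst sigma_le_sets) auto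
    qed
    show "sets (sigma (streams (space M)) ?G) \<subseteq> sets (stream_space M)"
      unfolding sigma_le_sets[OF G_Pow] by (auto intro!: sets_scylinder)
  qed
  then show ?thesis
    using G_Pow by simp
qed

lemma shift_stake_in_cyl_iff:
  assumes "\<omega> \<in> space (stream_space M)" "\<omega>' \<in> space (stream_space M)"
  shows "stake k \<omega> @- \<omega>' \<in> cyl M As \<longleftrightarrow> \<omega> \<in> cyl M (take k As) \<and> \<omega>' \<in> cyl M (drop k As)"
proof -
  have \<omega>\<omega>': "stake k \<omega> @- \<omega>' \<in> space (stream_space M)"
    using assms by (auto simp: space_stream_space streams_iff_snth shift_snth)
  have "stake k \<omega> @- \<omega>' \<in> cyl M As \<longleftrightarrow>
      (\<forall>j<length As. (if j < k then \<omega> !! j else \<omega>' !! (j - k)) \<in> As ! j)"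
    using \<omega>\<omega>' by (simp add: cyl_def shift_snth)
  also have "\<dots> \<longleftrightarrow> (\<forall>j<length (take k As). \<omega> !! j \<in> take k As ! j) \<and>
      (\<forall>j<length (drop k As). \<omega>' !! j \<in> drop k As ! j)"
  proof safe
    fix j
    assume H: "\<forall>j<length As. (if j < k then \<omega> !! j else \<omega>' !! (j - k)) \<in> As ! j"
    show "\<omega> !! j \<in> take k As ! j" if "j < length (take k As)"
      using H[rule_format, of j] that by auto
    show "\<omega>' !! j \<in> drop k As ! j" if "j < length (drop k As)"
      using H[rule_format, of "k + j"] that by auto
  next
    fix j
    assume "\<forall>j<length (take k As). \<omega> !! j \<in> take k As ! j"
      and "\<forall>j<length (drop k As). \<omega>' !! j \<in> drop k As ! j" and "j < length As"
    then show "(if j < k then \<omega> !! j else \<omega>' !! (j - k)) \<in> As ! j"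
      by (cases "j < k") (auto dest: spec[of _ j] spec[of _ "j - k"])
  qed
  finally show ?thesis
    using assms by (simp add: cyl_def)
qed

definition prefix_determined :: "'a measure \<Rightarrow> nat \<Rightarrow> 'a stream set \<Rightarrow> bool" where
  "prefix_determined M k H \<longleftrightarrow>
     (\<forall>\<omega>\<in>space (stream_space M). \<forall>\<omega>'\<in>space (stream_space M). stake k \<omega> @- \<omega>' \<in> H \<longleftrightarrow> \<omega> \<in> H)"

lemma prefix_determined_cyl:
  assumes "length Cs \<le> k"
  shows "prefix_determined M k (cyl M Cs)"
  using assms by (auto simp: prefix_determined_def shift_stake_in_cyl_iff cyl_Nil)

lemma INFM_arith_progression:
  fixes L :: nat
  assumes "L > 0" and "\<exists>\<^sub>\<infinity>k. Q k"
  shows "\<exists>r. \<exists>\<^sub>\<infinity>i. Q (r + i * L)"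
proof (rule ccontr)
  assume "\<not> ?thesis"
  then have "finite {i. Q (r + i * L)}" for r
    by (simp add: INFM_iff_infinite)
  moreover have "{k. Q k} \<subseteq> (\<Union>r<L. (\<lambda>i. r + i * L) ` {i. Q (r + i * L)})"
  proof
    fix k assume "k \<in> {k. Q k}"
    then have "Q (k mod L + (k div L) * L)" by simp
    then show "k \<in> (\<Union>r<L. (\<lambda>i. r + i * L) ` {i. Q (r + i * L)})"
      using \<open>L > 0\<close> by (intro UN_I[of "k mod L"]) (auto intro!: image_eqI[of _ _ "k div L"])
  qed
  ultimately have "finite {k. Q k}"
    by (meson finite_UN_I finite_imageI finite_lessThan finite_subset)
  then show False
    using assms(2) by (simp add: INFM_iff_infinite)
qed

lemma (in finite_measure) emeasure_Inter_decseq_eq_0: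
  assumes C: "range C \<subseteq> sets M" "decseq C" and "q < 1"
    and le: "\<And>m. emeasure M (\<Inter>i. C i) \<le> ennreal q * emeasure M (C m)"
  shows "emeasure M (\<Inter>i. C i) = 0"
proof -
  let ?q = "max 0 q"
  have "measure M (\<Inter>i. C i) \<le> ?q * measure M (C m)" for m
  proof -
    have "ennreal (measure M (\<Inter>i. C i)) \<le> ennreal (?q * measure M (C m))"
      using le[of m] by (cases "q \<ge> 0") (auto simp: emeasure_eq_measure ennreal_mult' ennreal_neg)
    then show ?thesis
      by (simp add: ennreal_le_iff)
  qed
  moreover have "(\<lambda>m. ?q * measure M (C m)) \<longlonglongrightarrow> ?q * measure M (\<Inter>i. C i)"
    using finite_Lim_measure_decseq[OF C] by (intro tendsto_mult_left)
  ultimately have "measure M (\<Inter>i. C i) \<le> ?q * measure M (\<Inter>i. C i)"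
    by (intro LIMSEQ_le_const) auto
  then have "measure M (\<Inter>i. C i) = 0"
    using \<open>q < 1\<close> measure_nonneg[of M "\<Inter>i. C i"]
    by (smt (verit, best) mult_le_cancel_right1 max_def mult_nonneg_nonneg)
  then show ?thesis
    by (simp add: emeasure_eq_measure)
qed

section \<open>The Markov property of the run measures\<close>

text \<open>cyl_push K Cs mu is the unnormalised distribution of the state at step length Cs on
  the cylinder of Cs (lemma distr_path_cyl_eq_cyl_push).\<close>
primrec cyl_push :: "('a \<Rightarrow> 'a measure) \<Rightarrow> 'a set list \<Rightarrow> 'a measure \<Rightarrow> 'a measure" where
  "cyl_push K [] \<mu> = \<mu>"
| "cyl_push K (C # Cs) \<mu> = cyl_push K Cs (density \<mu> (indicator C) \<bind> K)"

locale sts =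
  fixes M :: "'a measure" and K :: "'a \<Rightarrow> 'a measure" and P :: "'a measure \<Rightarrow> 'a stream measure"
  assumes kernel: "K \<in> M \<rightarrow>\<^sub>M prob_algebra M"
    and path: "is_path_measure M K P"
begin

lemma kernel_subprob [measurable]: "K \<in> M \<rightarrow>\<^sub>M subprob_algebra M"
  using kernel by (rule measurable_prob_algebraD)

lemma prob_space_kernel: "s \<in> space M \<Longrightarrow> prob_space (K s)"
  and sets_kernel: "s \<in> space M \<Longrightarrow> sets (K s) = sets M"
  using measurable_space[OF kernel] by (auto simp: space_prob_algebra)

lemma prob_space_path: "\<mu> \<in> space (prob_algebra M) \<Longrightarrow> prob_space (P \<mu>)"
  and sets_path: "\<mu> \<in> space (prob_algebra M) \<Longrightarrow> sets (P \<mu>) = sets (stream_space M)"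
  using path by (auto simp: is_path_measure_def space_prob_algebra)

lemma space_path: "\<mu> \<in> space (prob_algebra M) \<Longrightarrow> space (P \<mu>) = space (stream_space M)"
  using sets_path sets_eq_imp_space_eq by blast

lemma emeasure_path_cyl:
  "\<mu> \<in> space (prob_algebra M) \<Longrightarrow> set As \<subseteq> sets M \<Longrightarrow>
    emeasure (P \<mu>) (cyl M As) = (\<integral>\<^sup>+ s. cyl_fun K As s \<partial>\<mu>)"
  using path by (auto simp: is_path_measure_def)

lemma space_nonempty: "\<mu> \<in> space (prob_algebra M) \<Longrightarrow> space M \<noteq> {}"
  by (auto simp: space_prob_algebra) (metis prob_space.not_empty sets_eq_imp_space_eq)

lemma cyl_fun_measurable [measurable]: "set As \<subseteq> sets M \<Longrightarrow> cyl_fun K As \<in> borel_measurable M"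
proof (induction As)
  case Nil
  then show ?case by simp
next
  case (Cons A As)
  then have [measurable]: "A \<in> sets M" "cyl_fun K As \<in> borel_measurable M"
    by auto
  have "(\<lambda>s. \<integral>\<^sup>+ t. cyl_fun K As t \<partial>K s) \<in> borel_measurable M"
    by (rule nn_integral_measurable_subprob_algebra2[where N=M]) auto
  then show ?case by simp
qed

lemma cyl_fun_Nil_eq: "cyl_fun K [] = (\<lambda>_. 1)"
  by auto

lemma cyl_fun_singleton: "s \<in> space M \<Longrightarrow> cyl_fun K [D] s = indicator D s"
  using prob_space_kernel[of s] by (simp add: cyl_fun_Nil_eq prob_space.emeasure_space_1)

lemma sets_density_bind_kernel:
  assumes "sets \<mu> = sets M" "space M \<noteq> {}"
  shows "sets (density \<mu> (indicator C) \<bind> K) = sets M"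
  using assms sets_kernel sets_eq_imp_space_eq[OF assms(1)]
  by (subst sets_bind[where N=M]) auto

lemma sets_cyl_push: "sets \<mu> = sets M \<Longrightarrow> space M \<noteq> {} \<Longrightarrow> sets (cyl_push K Cs \<mu>) = sets M"
  by (induction Cs arbitrary: \<mu>) (simp_all add: sets_density_bind_kernel)

lemma nn_integral_cyl_fun_append:
  assumes "sets \<mu> = sets M" "space M \<noteq> {}" "set Cs \<subseteq> sets M" "set Ys \<subseteq> sets M"
  shows "(\<integral>\<^sup>+ s. cyl_fun K (Cs @ Ys) s \<partial>\<mu>) = (\<integral>\<^sup>+ s. cyl_fun K Ys s \<partial>cyl_push K Cs \<mu>)"
  using assms
proof (induction Cs arbitrary: \<mu>)
  case Nil
  then show ?case by simp
next
  case (Cons C Cs)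
  have C: "C \<in> sets \<mu>" and sets_\<mu>: "sets \<mu> = sets M"
    using Cons.prems by auto
  have tail_meas [measurable]: "cyl_fun K (Cs @ Ys) \<in> borel_measurable M"
    using Cons.prems by (intro cyl_fun_measurable) auto
  have step_meas: "(\<lambda>s. \<integral>\<^sup>+ t. cyl_fun K (Cs @ Ys) t \<partial>K s) \<in> borel_measurable M"
    by (rule nn_integral_measurable_subprob_algebra2[where N=M]) auto
  have K_density: "K \<in> density \<mu> (indicator C) \<rightarrow>\<^sub>M subprob_algebra M"
    using sets_\<mu> by (simp cong: measurable_cong_sets)
  have "(\<integral>\<^sup>+ s. cyl_fun K ((C # Cs) @ Ys) s \<partial>\<mu>) =
      (\<integral>\<^sup>+ s. indicator C s * (\<integral>\<^sup>+ t. cyl_fun K (Cs @ Ys) t \<partial>K s) \<partial>\<mu>)"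
    by simp
  also have "\<dots> = (\<integral>\<^sup>+ s. (\<integral>\<^sup>+ t. cyl_fun K (Cs @ Ys) t \<partial>K s) \<partial>density \<mu> (indicator C))"
    using step_meas C sets_\<mu> by (subst nn_integral_density) (auto cong: measurable_cong_sets)
  also have "\<dots> = (\<integral>\<^sup>+ t. cyl_fun K (Cs @ Ys) t \<partial>(density \<mu> (indicator C) \<bind> K))"
    by (rule nn_integral_bind[symmetric, OF tail_meas K_density])
  also have "\<dots> = (\<integral>\<^sup>+ s. cyl_fun K Ys s \<partial>cyl_push K (C # Cs) \<mu>)"
    using Cons.prems by (simp add: Cons.IH sets_density_bind_kernel)
  finally show ?case .
qed

lemma distr_path_cyl_eq_cyl_push:
  assumes \<mu>: "\<mu> \<in> space (prob_algebra M)" and Cs: "set Cs \<subseteq> sets M"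
  shows "distr (density (P \<mu>) (indicator (cyl M Cs))) M (\<lambda>\<omega>. \<omega> !! length Cs) = cyl_push K Cs \<mu>"
    (is "?D = _")
proof (rule measure_eqI)
  have sets_\<mu>: "sets \<mu> = sets M" and ne: "space M \<noteq> {}"
    using \<mu> space_nonempty by (auto simp: space_prob_algebra)
  show "sets ?D = sets (cyl_push K Cs \<mu>)"
    using sets_cyl_push[OF sets_\<mu> ne] by simp
  fix D assume "D \<in> sets ?D"
  then have D [measurable]: "D \<in> sets M" by simp
  have "emeasure ?D D = emeasure (P \<mu>) (cyl M Cs \<inter> ((\<lambda>\<omega>. \<omega> !! length Cs) -` D \<inter> space (P \<mu>)))"
    using Cs sets_path[OF \<mu>] space_path[OF \<mu>]
    by (subst emeasure_distr) (auto intro!: emeasure_restricted cong: measurable_cong_sets)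
  also have "cyl M Cs \<inter> ((\<lambda>\<omega>. \<omega> !! length Cs) -` D \<inter> space (P \<mu>)) = cyl M (Cs @ [D])"
    by (auto simp: cyl_snoc space_path[OF \<mu>])
  also have "emeasure (P \<mu>) (cyl M (Cs @ [D])) = (\<integral>\<^sup>+ s. cyl_fun K [D] s \<partial>cyl_push K Cs \<mu>)"
    using Cs by (simp add: emeasure_path_cyl[OF \<mu>] nn_integral_cyl_fun_append[OF sets_\<mu> ne])
  also have "\<dots> = (\<integral>\<^sup>+ s. indicator D s \<partial>cyl_push K Cs \<mu>)"
    using sets_eq_imp_space_eq[OF sets_cyl_push[OF sets_\<mu> ne]]
    by (intro nn_integral_cong) (simp add: cyl_fun_singleton del: cyl_fun.simps)
  also have "\<dots> = emeasure (cyl_push K Cs \<mu>) D"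
    using sets_cyl_push[OF sets_\<mu> ne] by simp
  finally show "emeasure ?D D = emeasure (cyl_push K Cs \<mu>) D" .
qed

lemma nn_integral_path_cyl_snth:
  assumes \<mu>: "\<mu> \<in> space (prob_algebra M)" and Cs: "set Cs \<subseteq> sets M"
    and f [measurable]: "f \<in> borel_measurable M"
  shows "(\<integral>\<^sup>+ \<omega>. indicator (cyl M Cs) \<omega> * f (\<omega> !! length Cs) \<partial>P \<mu>) = (\<integral>\<^sup>+ s. f s \<partial>cyl_push K Cs \<mu>)"
proof -
  have "(\<integral>\<^sup>+ \<omega>. indicator (cyl M Cs) \<omega> * f (\<omega> !! length Cs) \<partial>P \<mu>) =
      (\<integral>\<^sup>+ \<omega>. f (\<omega> !! length Cs) \<partial>density (P \<mu>) (indicator (cyl M Cs)))"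
    using Cs sets_path[OF \<mu>] by (subst nn_integral_density) (auto cong: measurable_cong_sets)
  also have "\<dots> = (\<integral>\<^sup>+ s. f s \<partial>distr (density (P \<mu>) (indicator (cyl M Cs))) M (\<lambda>\<omega>. \<omega> !! length Cs))"
    using sets_path[OF \<mu>] by (subst nn_integral_distr) (auto cong: measurable_cong_sets)
  finally show ?thesis
    by (simp add: distr_path_cyl_eq_cyl_push[OF \<mu> Cs])
qed

lemma return_in_prob_algebra: "s \<in> space M \<Longrightarrow> return M s \<in> space (prob_algebra M)"
  by (simp add: space_prob_algebra prob_space_return)

lemma emeasure_path_return_cyl:
  "s \<in> space M \<Longrightarrow> set Ds \<subseteq> sets M \<Longrightarrow> emeasure (P (return M s)) (cyl M Ds) = cyl_fun K Ds s"
  by (simp add: emeasure_path_cyl return_in_prob_algebra nn_integral_return cyl_fun_measurable)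

lemma measurable_path_return [measurable]: "(\<lambda>s. P (return M s)) \<in> M \<rightarrow>\<^sub>M prob_algebra (stream_space M)"
proof (rule measurable_prob_algebra_generated[OF sets_stream_space_eq_sigma_scylinder Int_stable_scylinder])
  show "scylinder (space M) ` lists (sets M) \<subseteq> Pow (streams (space M))"
    using scylinder_streams by auto
  fix s assume "s \<in> space M"
  then show "prob_space (P (return M s))" "sets (P (return M s)) = sets (stream_space M)"
    using prob_space_path sets_path return_in_prob_algebra by auto
next
  fix A assume "A \<in> scylinder (space M) ` lists (sets M)"
  then obtain Ds where Ds: "set Ds \<subseteq> sets M" "A = cyl M Ds"
    by (auto simp: cyl_eq_scylinder)
  then have "(\<lambda>s. emeasure (P (return M s)) A) \<in> borel_measurable M \<longleftrightarrow> cyl_fun K Ds \<in> borel_measurable M"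
    by (intro measurable_cong) (simp add: emeasure_path_return_cyl)
  then show "(\<lambda>s. emeasure (P (return M s)) A) \<in> borel_measurable M"
    using Ds by simp
qed


lemma emeasure_path_return_measurable [measurable]:
  "Z \<in> sets (stream_space M) \<Longrightarrow> (\<lambda>s. emeasure (P (return M s)) Z) \<in> borel_measurable M"
  by (rule measurable_compose[OF measurable_prob_algebraD[OF measurable_path_return]
        measurable_emeasure_subprob_algebra])

definition splice :: "nat \<Rightarrow> 'a stream \<Rightarrow> 'a stream measure" where
  "splice k \<omega> = distr (P (return M (\<omega> !! k))) (stream_space M) (\<lambda>\<omega>'. stake k \<omega> @- \<omega>')"

lemma measurable_splice [measurable]: "splice k \<in> stream_space M \<rightarrow>\<^sub>M prob_algebra (stream_space M)"
  unfolding splice_def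
proof (rule measurable_distr_prob_space2)
  show "(\<lambda>\<omega>. P (return M (\<omega> !! k))) \<in> stream_space M \<rightarrow>\<^sub>M prob_algebra (stream_space M)"
    by (rule measurable_compose[OF measurable_snth measurable_path_return])
qed (simp add: case_prod_beta')

lemma emeasure_splice:
  assumes \<omega>: "\<omega> \<in> space (stream_space M)" and X: "X \<in> sets (stream_space M)"
  shows "emeasure (splice k \<omega>) X =
    emeasure (P (return M (\<omega> !! k))) {\<omega>' \<in> space (stream_space M). stake k \<omega> @- \<omega>' \<in> X}"
proof -
  have s: "\<omega> !! k \<in> space M"
    using \<omega> by (simp add: space_stream_space snth_in)
  have "(\<lambda>\<omega>'. stake k \<omega> @- \<omega>') \<in> stream_space M \<rightarrow>\<^sub>M stream_space M"
    using \<omega> by (intro measurable_shift measurable_const) (auto simp: space_stream_space)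
  then have "(\<lambda>\<omega>'. stake k \<omega> @- \<omega>') \<in> P (return M (\<omega> !! k)) \<rightarrow>\<^sub>M stream_space M"
    using sets_path[OF return_in_prob_algebra[OF s]] by (simp cong: measurable_cong_sets)
  then show ?thesis
    using X space_path[OF return_in_prob_algebra[OF s]]
    by (simp add: splice_def emeasure_distr Int_def conj_commute)
qed

lemma emeasure_splice_cyl:
  assumes \<omega>: "\<omega> \<in> space (stream_space M)" and xs: "set xs \<subseteq> sets M"
  shows "emeasure (splice k \<omega>) (cyl M xs) = indicator (cyl M (take k xs)) \<omega> * cyl_fun K (drop k xs) (\<omega> !! k)"
proof -
  have "{\<omega>' \<in> space (stream_space M). stake k \<omega> @- \<omega>' \<in> cyl M xs} =
      (if \<omega> \<in> cyl M (take k xs) then cyl M (drop k xs) else {})"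
    using \<omega> cyl_subset_space[of M "drop k xs"] by (auto simp: shift_stake_in_cyl_iff)
  moreover have "\<omega> !! k \<in> space M"
    using \<omega> by (simp add: space_stream_space snth_in)
  moreover have "set (drop k xs) \<subseteq> sets M"
    using xs by (auto dest: in_set_dropD)
  ultimately show ?thesis
    using xs by (simp add: emeasure_splice[OF \<omega>] emeasure_path_return_cyl)
qed

lemma nn_integral_path_cyl_split:
  assumes \<mu>: "\<mu> \<in> space (prob_algebra M)" and xs: "set xs \<subseteq> sets M"
  shows "(\<integral>\<^sup>+ \<omega>. indicator (cyl M (take k xs)) \<omega> * cyl_fun K (drop k xs) (\<omega> !! k) \<partial>P \<mu>) =
    emeasure (P \<mu>) (cyl M xs)"
proof (cases "k \<le> length xs")
  case True
  have sets_\<mu>: "sets \<mu> = sets M"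
    using \<mu> by (simp add: space_prob_algebra)
  have take_drop: "set (take k xs) \<subseteq> sets M" "set (drop k xs) \<subseteq> sets M"
    using xs by (auto dest: in_set_takeD in_set_dropD)
  have "(\<integral>\<^sup>+ \<omega>. indicator (cyl M (take k xs)) \<omega> * cyl_fun K (drop k xs) (\<omega> !! k) \<partial>P \<mu>) =
      (\<integral>\<^sup>+ s. cyl_fun K (drop k xs) s \<partial>cyl_push K (take k xs) \<mu>)"
    using nn_integral_path_cyl_snth[OF \<mu> take_drop(1) cyl_fun_measurable[OF take_drop(2)]] True
    by simp
  also have "\<dots> = (\<integral>\<^sup>+ s. cyl_fun K xs s \<partial>\<mu>)"
    using nn_integral_cyl_fun_append[OF sets_\<mu> space_nonempty[OF \<mu>] take_drop] by simp
  finally show ?thesis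
    by (simp add: emeasure_path_cyl[OF \<mu> xs])
next
  case False
  then show ?thesis
    using xs sets_path[OF \<mu>] by (simp add: cyl_fun_Nil_eq)
qed

lemma path_eq_bind_splice:
  assumes \<mu>: "\<mu> \<in> space (prob_algebra M)"
  shows "P \<mu> = P \<mu> \<bind> splice k"
proof (rule stream_space_eq_scylinder[where S=M and G="sets M" and C="{space M}"])
  have splice_P: "splice k \<in> P \<mu> \<rightarrow>\<^sub>M prob_algebra (stream_space M)"
    using sets_path[OF \<mu>] by (simp cong: measurable_cong_sets)
  have P_prob: "P \<mu> \<in> space (prob_algebra (stream_space M))"
    using prob_space_path[OF \<mu>] sets_path[OF \<mu>] by (simp add: space_prob_algebra)
  show "prob_space (P \<mu>)" "sets (P \<mu>) = sets (stream_space M)"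
    using prob_space_path[OF \<mu>] sets_path[OF \<mu>] by auto
  show "prob_space (P \<mu> \<bind> splice k)" "sets (P \<mu> \<bind> splice k) = sets (stream_space M)"
    using prob_space_bind'[OF _ splice_P] sets_bind'[OF _ splice_P] P_prob sets_path[OF \<mu>]
    by (auto simp: space_prob_algebra)
  show "Int_stable (sets M)"
    by (auto simp: Int_stable_def)
  show "sets M = sets (sigma (space M) (sets M))"
    by (simp add: sets.sigma_sets_eq)
  show "countable {space M}" "{space M} \<subseteq> sets M" "\<Union> {space M} = space M" "sets M \<subseteq> Pow (space M)"
    using sets.space_closed by auto
  fix xs :: "'a set list"
  assume "xs \<in> lists (sets M)"
  then have xs: "set xs \<subseteq> sets M" by auto
  have "emeasure (P \<mu> \<bind> splice k) (cyl M xs) = (\<integral>\<^sup>+ \<omega>. emeasure (splice k \<omega>) (cyl M xs) \<partial>P \<mu>)"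
    using xs prob_space.not_empty[OF prob_space_path[OF \<mu>]] measurable_prob_algebraD[OF splice_P]
    by (intro emeasure_bind) auto
  also have "\<dots> = (\<integral>\<^sup>+ \<omega>. indicator (cyl M (take k xs)) \<omega> * cyl_fun K (drop k xs) (\<omega> !! k) \<partial>P \<mu>)"
    using xs by (intro nn_integral_cong) (simp add: emeasure_splice_cyl space_path[OF \<mu>])
  also have "\<dots> = emeasure (P \<mu>) (cyl M xs)"
    by (rule nn_integral_path_cyl_split[OF \<mu> xs])
  finally show "emeasure (P \<mu>) (scylinder (space M) xs) = emeasure (P \<mu> \<bind> splice k) (scylinder (space M) xs)"
    by (simp add: cyl_eq_scylinder)
qed

lemma emeasure_path_splice:
  assumes \<mu>: "\<mu> \<in> space (prob_algebra M)" and X: "X \<in> sets (stream_space M)"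
  shows "emeasure (P \<mu>) X = (\<integral>\<^sup>+ \<omega>. emeasure (P (return M (\<omega> !! k)))
    {\<omega>' \<in> space (stream_space M). stake k \<omega> @- \<omega>' \<in> X} \<partial>P \<mu>)"
proof -
  have "splice k \<in> P \<mu> \<rightarrow>\<^sub>M subprob_algebra (stream_space M)"
    using measurable_prob_algebraD[OF measurable_splice] sets_path[OF \<mu>]
    by (simp cong: measurable_cong_sets)
  then have "emeasure (P \<mu>) X = (\<integral>\<^sup>+ \<omega>. emeasure (splice k \<omega>) X \<partial>P \<mu>)"
    using X prob_space.not_empty[OF prob_space_path[OF \<mu>]]
    by (subst path_eq_bind_splice[OF \<mu>, of k]) (intro emeasure_bind, auto)
  also have "\<dots> = (\<integral>\<^sup>+ \<omega>. emeasure (P (return M (\<omega> !! k)))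
    {\<omega>' \<in> space (stream_space M). stake k \<omega> @- \<omega>' \<in> X} \<partial>P \<mu>)"
    using X by (intro nn_integral_cong) (simp add: emeasure_splice space_path[OF \<mu>])
  finally show ?thesis .
qed

lemma emeasure_path_prefix_determined:
  assumes \<mu>: "\<mu> \<in> space (prob_algebra M)" and H: "H \<in> sets (stream_space M)"
    and past: "prefix_determined M k H" and Z: "Z \<in> sets (stream_space M)"
  shows "emeasure (P \<mu>) (H \<inter> {\<omega> \<in> space (stream_space M). sdrop k \<omega> \<in> Z}) =
    (\<integral>\<^sup>+ \<omega>. indicator H \<omega> * emeasure (P (return M (\<omega> !! k))) Z \<partial>P \<mu>)"
proof -
  let ?X = "H \<inter> {\<omega> \<in> space (stream_space M). sdrop k \<omega> \<in> Z}"
  have X: "?X \<in> sets (stream_space M)"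
    using H Z by measurable
  have shift_eq: "{\<omega>' \<in> space (stream_space M). stake k \<omega> @- \<omega>' \<in> ?X} = (if \<omega> \<in> H then Z else {})"
    if "\<omega> \<in> space (stream_space M)" for \<omega>
    using that past sets.sets_into_space[OF Z]
    by (auto simp: prefix_determined_def space_stream_space sdrop_shift streams_iff_snth shift_snth)
  have "emeasure (P \<mu>) ?X = (\<integral>\<^sup>+ \<omega>. emeasure (P (return M (\<omega> !! k)))
      {\<omega>' \<in> space (stream_space M). stake k \<omega> @- \<omega>' \<in> ?X} \<partial>P \<mu>)"
    by (rule emeasure_path_splice[OF \<mu> X])
  also have "\<dots> = (\<integral>\<^sup>+ \<omega>. indicator H \<omega> * emeasure (P (return M (\<omega> !! k))) Z \<partial>P \<mu>)"
  proof (rule nn_integral_cong)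
    fix \<omega> assume "\<omega> \<in> space (P \<mu>)"
    then have "\<omega> \<in> space (stream_space M)"
      by (simp add: space_path[OF \<mu>])
    then show "emeasure (P (return M (\<omega> !! k))) {\<omega>' \<in> space (stream_space M). stake k \<omega> @- \<omega>' \<in> ?X} =
        indicator H \<omega> * emeasure (P (return M (\<omega> !! k))) Z"
      unfolding shift_eq[OF \<open>\<omega> \<in> space (stream_space M)\<close>] by (simp split: split_indicator)
  qed
  finally show ?thesis .
qed

lemma distr_path_shd:
  assumes \<mu>: "\<mu> \<in> space (prob_algebra M)"
  shows "distr (P \<mu>) M shd = \<mu>"
proof -
  have "density (P \<mu>) (indicator (cyl M [])) = density (P \<mu>) (\<lambda>_. 1)"
    using sets_path[OF \<mu>] by (intro density_cong) (auto simp: cyl_Nil space_path[OF \<mu>] cong: measurable_cong_sets)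
  then have "density (P \<mu>) (indicator (cyl M [])) = P \<mu>"
    by (simp add: density_1)
  then show ?thesis
    using distr_path_cyl_eq_cyl_push[OF \<mu>, of "[]"] by simp
qed

lemma emeasure_path_eq_nn_integral_return:
  assumes \<mu>: "\<mu> \<in> space (prob_algebra M)" and Z: "Z \<in> sets (stream_space M)"
  shows "emeasure (P \<mu>) Z = (\<integral>\<^sup>+ s. emeasure (P (return M s)) Z \<partial>\<mu>)"
proof -
  have "emeasure (P \<mu>) Z = (\<integral>\<^sup>+ \<omega>. emeasure (P (return M (\<omega> !! 0))) Z \<partial>P \<mu>)"
    using emeasure_path_splice[OF \<mu> Z, of 0] sets.sets_into_space[OF Z]
    by (simp add: Collect_conj_eq Int_absorb1 Collect_mem_eq)
  also have "\<dots> = (\<integral>\<^sup>+ s. emeasure (P (return M s)) Z \<partial>distr (P \<mu>) M (\<lambda>\<omega>. \<omega> !! 0))"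
    using Z sets_path[OF \<mu>] by (subst nn_integral_distr) (auto cong: measurable_cong_sets)
  finally show ?thesis
    by (simp add: distr_path_shd[OF \<mu>])
qed

lemma emeasure_return_cyl_singleton_Int_le:
  assumes s: "s \<in> space M" and A: "A \<in> sets M" and X: "X \<in> sets (stream_space M)"
  shows "emeasure (P (return M s)) (cyl M [A] \<inter> X) \<le> indicator A s * emeasure (P (return M s)) X"
proof (cases "s \<in> A")
  case True
  then show ?thesis
    using X sets_path[OF return_in_prob_algebra[OF s]] by (simp add: emeasure_mono)
next
  case False
  have "emeasure (P (return M s)) (cyl M [A] \<inter> X) \<le> emeasure (P (return M s)) (cyl M [A])"
    using A sets_path[OF return_in_prob_algebra[OF s]] by (intro emeasure_mono) auto
  also have "\<dots> = 0"
    using s A False by (simp add: emeasure_path_return_cyl cyl_fun_singleton del: cyl_fun.simps)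
  finally show ?thesis
    by simp
qed

end

section \<open>Avoiding B after an occurrence of phi_A\<close>

locale sts_uniform_reach = sts +
  fixes B :: "'a set" and As :: "'a set list" and p :: real
  assumes sets_B [measurable]: "B \<in> sets M"
    and As_ne: "As \<noteq> []" and sets_As: "set As \<subseteq> sets M"
    and p: "p > 0"
    and reach: "\<forall>\<nu> \<in> space (prob_algebra M). emeasure (P \<nu>) (cyl M As) > 0 \<longrightarrow>
                 emeasure (P (cond_dist M P As \<nu>)) (runs_F M B) \<ge> ennreal p"
begin

abbreviation never_B :: "'a stream set" where
  "never_B \<equiv> runs_G M (space M - B)"

lemma sets_cyl_As [measurable]: "cyl M As \<in> sets (stream_space M)"
  using sets_As by simp

lemma sets_runs_F [measurable]: "runs_F M B \<in> sets (stream_space M)"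
  unfolding runs_F_def by measurable

lemma never_B_eq: "never_B = space (stream_space M) - runs_F M B"
  by (auto simp: runs_G_def runs_F_def space_stream_space snth_in)

lemma sets_never_B [measurable]: "never_B \<in> sets (stream_space M)"
  unfolding never_B_eq by measurable

lemma cond_dist_in_prob_algebra:
  assumes \<nu>: "\<nu> \<in> space (prob_algebra M)" and pos: "emeasure (P \<nu>) (cyl M As) \<noteq> 0"
  shows "cond_dist M P As \<nu> \<in> space (prob_algebra M)"
proof -
  interpret P\<nu>: prob_space "P \<nu>"
    by (rule prob_space_path[OF \<nu>])
  have "prob_space (uniform_measure (P \<nu>) (cyl M As))"
    using pos P\<nu>.emeasure_finite sets_path[OF \<nu>]
    by (intro prob_space_uniform_measure) auto
  then have "prob_space (cond_dist M P As \<nu>)"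
    unfolding cond_dist_def
    by (rule prob_space.prob_space_distr) (simp add: sets_path[OF \<nu>] cong: measurable_cong_sets)
  then show ?thesis
    by (simp add: space_prob_algebra cond_dist_def)
qed

lemma nn_integral_cond_dist:
  assumes \<nu>: "\<nu> \<in> space (prob_algebra M)" and pos: "emeasure (P \<nu>) (cyl M As) \<noteq> 0"
    and f [measurable]: "f \<in> borel_measurable M"
  shows "(\<integral>\<^sup>+ \<omega>. indicator (cyl M As) \<omega> * f (\<omega> !! (length As - 1)) \<partial>P \<nu>) =
    emeasure (P \<nu>) (cyl M As) * (\<integral>\<^sup>+ t. f t \<partial>cond_dist M P As \<nu>)"
proof -
  interpret P\<nu>: prob_space "P \<nu>"
    by (rule prob_space_path[OF \<nu>])
  let ?c = "emeasure (P \<nu>) (cyl M As)"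
  have f_path: "(\<lambda>\<omega>. f (\<omega> !! (length As - 1))) \<in> borel_measurable (P \<nu>)"
    using sets_path[OF \<nu>] by (simp cong: measurable_cong_sets)
  have "(\<integral>\<^sup>+ t. f t \<partial>cond_dist M P As \<nu>) =
      (\<integral>\<^sup>+ \<omega>. f (\<omega> !! (length As - 1)) \<partial>uniform_measure (P \<nu>) (cyl M As))"
    unfolding cond_dist_def using sets_path[OF \<nu>]
    by (subst nn_integral_distr) (auto cong: measurable_cong_sets)
  also have "\<dots> = (\<integral>\<^sup>+ \<omega>. f (\<omega> !! (length As - 1)) * indicator (cyl M As) \<omega> \<partial>P \<nu>) / ?c"
    using f_path sets_path[OF \<nu>] by (intro nn_integral_uniform_measure) auto
  finally have "?c * (\<integral>\<^sup>+ t. f t \<partial>cond_dist M P As \<nu>) =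
      ?c * ((\<integral>\<^sup>+ \<omega>. f (\<omega> !! (length As - 1)) * indicator (cyl M As) \<omega> \<partial>P \<nu>) / ?c)"
    by simp
  also have "\<dots> = (\<integral>\<^sup>+ \<omega>. f (\<omega> !! (length As - 1)) * indicator (cyl M As) \<omega> \<partial>P \<nu>)"
    using pos P\<nu>.emeasure_finite
    by (simp add: ennreal_times_divide mult.commute[of ?c] ennreal_mult_divide_eq)
  finally show ?thesis
    by (simp add: mult.commute)
qed

lemma emeasure_cond_dist_never_B:
  assumes \<nu>: "\<nu> \<in> space (prob_algebra M)" and pos: "emeasure (P \<nu>) (cyl M As) \<noteq> 0"
  shows "emeasure (P (cond_dist M P As \<nu>)) never_B \<le> ennreal (1 - p)"
proof -
  have cond: "cond_dist M P As \<nu> \<in> space (prob_algebra M)"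
    by (rule cond_dist_in_prob_algebra[OF \<nu> pos])
  interpret Pc: prob_space "P (cond_dist M P As \<nu>)"
    by (rule prob_space_path[OF cond])
  have "Pc.prob (runs_F M B) \<ge> p"
    using reach \<nu> pos by (auto simp: zero_less_iff_neq_zero Pc.emeasure_eq_measure)
  moreover have "Pc.prob never_B = 1 - Pc.prob (runs_F M B)"
    unfolding never_B_eq using space_path[OF cond] sets_path[OF cond]
    by (metis Pc.prob_compl sets_runs_F)
  ultimately show ?thesis
    by (simp add: Pc.emeasure_eq_measure ennreal_leI)
qed

lemma emeasure_cyl_never_B_le:
  assumes \<nu>: "\<nu> \<in> space (prob_algebra M)"
  shows "emeasure (P \<nu>) (cyl M As \<inter> never_B) \<le> ennreal (1 - p) * emeasure (P \<nu>) (cyl M As)"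
proof (cases "emeasure (P \<nu>) (cyl M As) = 0")
  case True
  then show ?thesis
    using emeasure_mono[of "cyl M As \<inter> never_B" "cyl M As" "P \<nu>"] sets_path[OF \<nu>] by simp
next
  case False
  obtain Cs A where As_eq: "As = Cs @ [A]"
    using As_ne by (metis rev_exhaust)
  have [measurable]: "A \<in> sets M" and Cs: "set Cs \<subseteq> sets M"
    using sets_As As_eq by auto
  let ?n = "length Cs" and ?Z = "cyl M [A] \<inter> never_B"
  have "cyl M As \<inter> never_B \<subseteq> cyl M Cs \<inter> {\<omega> \<in> space (stream_space M). sdrop ?n \<omega> \<in> ?Z}"
    by (auto simp: As_eq cyl_snoc cyl_def[of M "[A]"] runs_G_def space_stream_space sdrop_snth
        streams_iff_snth)
  then have "emeasure (P \<nu>) (cyl M As \<inter> never_B) \<le>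
      emeasure (P \<nu>) (cyl M Cs \<inter> {\<omega> \<in> space (stream_space M). sdrop ?n \<omega> \<in> ?Z})"
    using Cs sets_path[OF \<nu>] by (intro emeasure_mono) auto
  also have "\<dots> = (\<integral>\<^sup>+ \<omega>. indicator (cyl M Cs) \<omega> * emeasure (P (return M (\<omega> !! ?n))) ?Z \<partial>P \<nu>)"
    using Cs by (intro emeasure_path_prefix_determined[OF \<nu>] prefix_determined_cyl) auto
  also have "\<dots> \<le> (\<integral>\<^sup>+ \<omega>. indicator (cyl M As) \<omega> * emeasure (P (return M (\<omega> !! (length As - 1)))) never_B \<partial>P \<nu>)"
  proof (rule nn_integral_mono)
    fix \<omega> assume "\<omega> \<in> space (P \<nu>)"
    then have \<omega>: "\<omega> \<in> space (stream_space M)" and s: "\<omega> !! ?n \<in> space M"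
      by (auto simp: space_path[OF \<nu>] space_stream_space snth_in)
    have "indicator (cyl M Cs) \<omega> * emeasure (P (return M (\<omega> !! ?n))) ?Z \<le>
        indicator (cyl M Cs) \<omega> * (indicator A (\<omega> !! ?n) * emeasure (P (return M (\<omega> !! ?n))) never_B)"
      by (intro mult_left_mono emeasure_return_cyl_singleton_Int_le[OF s]) auto
    also have "\<dots> = indicator (cyl M As) \<omega> * emeasure (P (return M (\<omega> !! (length As - 1)))) never_B"
      using \<omega> by (simp add: As_eq cyl_snoc split: split_indicator)
    finally show "indicator (cyl M Cs) \<omega> * emeasure (P (return M (\<omega> !! ?n))) ?Z \<le>
        indicator (cyl M As) \<omega> * emeasure (P (return M (\<omega> !! (length As - 1)))) never_B" .
  qed
  also have "\<dots> = emeasure (P \<nu>) (cyl M As) * (\<integral>\<^sup>+ t. emeasure (P (return M t)) never_B \<partial>cond_dist M P As \<nu>)"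
    using False by (intro nn_integral_cond_dist[OF \<nu>]) auto
  also have "\<dots> = emeasure (P \<nu>) (cyl M As) * emeasure (P (cond_dist M P As \<nu>)) never_B"
    by (simp add: emeasure_path_eq_nn_integral_return[OF cond_dist_in_prob_algebra[OF \<nu> False]])
  also have "\<dots> \<le> emeasure (P \<nu>) (cyl M As) * ennreal (1 - p)"
    by (intro mult_left_mono emeasure_cond_dist_never_B[OF \<nu> False]) simp
  finally show ?thesis
    by (simp add: mult.commute)
qed

lemma emeasure_prefix_cyl_never_B_le:
  assumes \<mu>: "\<mu> \<in> space (prob_algebra M)" and H: "H \<in> sets (stream_space M)"
    and past: "prefix_determined M k H"
  shows "emeasure (P \<mu>) (H \<inter> {\<omega> \<in> space (stream_space M). sdrop k \<omega> \<in> cyl M As \<inter> never_B})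
    \<le> ennreal (1 - p) * emeasure (P \<mu>) (H \<inter> {\<omega> \<in> space (stream_space M). sdrop k \<omega> \<in> cyl M As})"
proof -
  have "emeasure (P \<mu>) (H \<inter> {\<omega> \<in> space (stream_space M). sdrop k \<omega> \<in> cyl M As \<inter> never_B})
     = (\<integral>\<^sup>+ \<omega>. indicator H \<omega> * emeasure (P (return M (\<omega> !! k))) (cyl M As \<inter> never_B) \<partial>P \<mu>)"
    by (rule emeasure_path_prefix_determined[OF \<mu> H past]) simp
  also have "\<dots> \<le> (\<integral>\<^sup>+ \<omega>. ennreal (1 - p) * (indicator H \<omega> * emeasure (P (return M (\<omega> !! k))) (cyl M As)) \<partial>P \<mu>)"
  proof (rule nn_integral_mono)
    fix \<omega> assume "\<omega> \<in> space (P \<mu>)"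
    then have "\<omega> !! k \<in> space M"
      by (simp add: space_path[OF \<mu>] space_stream_space snth_in)
    then show "indicator H \<omega> * emeasure (P (return M (\<omega> !! k))) (cyl M As \<inter> never_B)
        \<le> ennreal (1 - p) * (indicator H \<omega> * emeasure (P (return M (\<omega> !! k))) (cyl M As))"
      using emeasure_cyl_never_B_le[OF return_in_prob_algebra] by (auto split: split_indicator)
  qed
  also have "\<dots> = ennreal (1 - p) * (\<integral>\<^sup>+ \<omega>. indicator H \<omega> * emeasure (P (return M (\<omega> !! k))) (cyl M As) \<partial>P \<mu>)"
    using H sets_path[OF \<mu>] by (intro nn_integral_cmult) (simp cong: measurable_cong_sets)
  also have "\<dots> = ennreal (1 - p) * emeasure (P \<mu>) (H \<inter> {\<omega> \<in> space (stream_space M). sdrop k \<omega> \<in> cyl M As})"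
    by (simp add: emeasure_path_prefix_determined[OF \<mu> H past])
  finally show ?thesis .
qed


section \<open>Occurrences of phi_A in a residue class\<close>

definition occurs_at :: "nat \<Rightarrow> 'a stream \<Rightarrow> bool" where
  "occurs_at t \<omega> \<longleftrightarrow> sdrop t \<omega> \<in> cyl M As"

lemma measurable_occurs_at [measurable]: "Measurable.pred (stream_space M) (occurs_at t)"
  unfolding occurs_at_def by measurable

lemma occurs_at_iff:
  "\<omega> \<in> space (stream_space M) \<Longrightarrow> occurs_at t \<omega> \<longleftrightarrow> (\<forall>l<length As. \<omega> !! (t + l) \<in> As ! l)"
  by (auto simp: occurs_at_def cyl_def space_stream_space sdrop_snth streams_iff_snth)

abbreviation slot :: "nat \<Rightarrow> nat \<Rightarrow> nat" where
  "slot r i \<equiv> r + i * length As"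

definition quiet :: "nat \<Rightarrow> nat \<Rightarrow> nat \<Rightarrow> 'a stream set" where
  "quiet r m i = {\<omega> \<in> space (stream_space M). (\<forall>t < slot r i. \<omega> !! t \<notin> B) \<and>
      (\<forall>i'. m \<le> i' \<and> i' < i \<longrightarrow> \<not> occurs_at (slot r i') \<omega>)}"

definition first_occ :: "nat \<Rightarrow> nat \<Rightarrow> nat \<Rightarrow> 'a stream set" where
  "first_occ r m i = quiet r m i \<inter> {\<omega> \<in> space (stream_space M). sdrop (slot r i) \<omega> \<in> cyl M As}"

definition first_occ_never_B :: "nat \<Rightarrow> nat \<Rightarrow> nat \<Rightarrow> 'a stream set" where
  "first_occ_never_B r m i =
     quiet r m i \<inter> {\<omega> \<in> space (stream_space M). sdrop (slot r i) \<omega> \<in> cyl M As \<inter> never_B}"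

definition occ_from :: "nat \<Rightarrow> nat \<Rightarrow> 'a stream set" where
  "occ_from r m = (\<Union>j. first_occ r m (m + j))"

lemma sets_quiet [measurable]: "quiet r m i \<in> sets (stream_space M)"
  unfolding quiet_def by measurable

lemma sets_first_occ [measurable]: "first_occ r m i \<in> sets (stream_space M)"
  unfolding first_occ_def by measurable

lemma sets_first_occ_never_B [measurable]: "first_occ_never_B r m i \<in> sets (stream_space M)"
  unfolding first_occ_never_B_def by measurable

lemma sets_occ_from [measurable]: "occ_from r m \<in> sets (stream_space M)"
  unfolding occ_from_def by measurable

lemma prefix_determined_quiet: "prefix_determined M (slot r i) (quiet r m i)"
  unfolding prefix_determined_def
proof (intro ballI)
  fix \<omega> \<omega>' assume \<omega>: "\<omega> \<in> space (stream_space M)" and \<omega>': "\<omega>' \<in> space (stream_space M)"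
  let ?w = "stake (slot r i) \<omega> @- \<omega>'"
  have w: "?w \<in> space (stream_space M)"
    using \<omega> \<omega>' by (auto simp: space_stream_space streams_iff_snth shift_snth)
  have same: "?w !! j = \<omega> !! j" if "j < slot r i" for j
    using that by (simp add: shift_snth)
  have "occurs_at (slot r i') ?w = occurs_at (slot r i') \<omega>" if "i' < i" for i'
  proof -
    have "Suc i' * length As \<le> i * length As"
      using that by (intro mult_le_mono1) simp
    then have "slot r i' + l < slot r i" if "l < length As" for l
      using that by simp
    then show ?thesis
      unfolding occurs_at_iff[OF w] occurs_at_iff[OF \<omega>] using same by auto
  qed
  then show "?w \<in> quiet r m i \<longleftrightarrow> \<omega> \<in> quiet r m i"
    unfolding quiet_def using w \<omega> same by auto
qed

lemma disjoint_family_first_occ: "disjoint_family (\<lambda>j. first_occ r m (m + j))"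
proof -
  have "first_occ r m (m + a) \<inter> first_occ r m (m + b) = {}" if "a < b" for a b
    using that by (auto simp: first_occ_def quiet_def occurs_at_def)
  then show ?thesis
    unfolding disjoint_family_on_def by (metis inf_commute linorder_neqE_nat)
qed

lemma in_occ_from:
  assumes \<omega>: "\<omega> \<in> space (stream_space M)" and no_B: "\<forall>t < slot r i. \<omega> !! t \<notin> B"
    and occ: "occurs_at (slot r i) \<omega>" and "m \<le> i"
  shows "\<omega> \<in> occ_from r m"
proof -
  define i\<^sub>0 where "i\<^sub>0 = (LEAST i. m \<le> i \<and> occurs_at (slot r i) \<omega>)"
  have i\<^sub>0: "m \<le> i\<^sub>0" "occurs_at (slot r i\<^sub>0) \<omega>"
    using LeastI[of "\<lambda>i. m \<le> i \<and> occurs_at (slot r i) \<omega>", OF conjI[OF \<open>m \<le> i\<close> occ]]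
    by (auto simp: i\<^sub>0_def)
  have "i\<^sub>0 \<le> i"
    unfolding i\<^sub>0_def using \<open>m \<le> i\<close> occ by (intro Least_le) simp
  then have "slot r i\<^sub>0 \<le> slot r i"
    by simp
  then have "\<forall>t < slot r i\<^sub>0. \<omega> !! t \<notin> B"
    using no_B less_le_trans by blast
  moreover have "\<not> occurs_at (slot r i') \<omega>" if "m \<le> i'" "i' < i\<^sub>0" for i'
    using that not_less_Least[of i' "\<lambda>i. m \<le> i \<and> occurs_at (slot r i) \<omega>"] by (simp add: i\<^sub>0_def)
  ultimately have "\<omega> \<in> first_occ r m (m + (i\<^sub>0 - m))"
    using \<omega> i\<^sub>0 by (auto simp: first_occ_def quiet_def occurs_at_def)
  then show ?thesis
    by (auto simp: occ_from_def)
qed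

lemma decseq_occ_from: "decseq (occ_from r)"
proof (rule decseq_SucI, rule subsetI)
  fix m \<omega> assume "\<omega> \<in> occ_from r (Suc m)"
  then obtain j where "\<omega> \<in> first_occ r (Suc m) (Suc m + j)"
    by (auto simp: occ_from_def)
  then show "\<omega> \<in> occ_from r m"
    by (intro in_occ_from[of _ _ "Suc m + j"]) (auto simp: first_occ_def quiet_def occurs_at_def)
qed

lemma Inter_occ_from_eq:
  "(\<Inter>m. occ_from r m) = never_B \<inter> {\<omega> \<in> space (stream_space M). \<exists>\<^sub>\<infinity>i. occurs_at (slot r i) \<omega>}"
proof (intro equalityI subsetI)
  fix \<omega> assume \<omega>: "\<omega> \<in> (\<Inter>m. occ_from r m)"
  have late: "\<exists>i\<ge>m. \<omega> \<in> first_occ r m i" for m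
  proof -
    obtain j where "\<omega> \<in> first_occ r m (m + j)"
      using \<omega> by (auto simp: occ_from_def)
    then show ?thesis
      by (intro exI[of _ "m + j"]) auto
  qed
  have space: "\<omega> \<in> space (stream_space M)"
    using late[of 0] by (auto simp: first_occ_def)
  have "\<exists>i\<ge>m. occurs_at (slot r i) \<omega>" for m
    using late[of m] by (auto simp: first_occ_def occurs_at_def)
  then have "\<exists>\<^sub>\<infinity>i. occurs_at (slot r i) \<omega>"
    by (simp add: INFM_nat_le)
  moreover have "\<omega> !! t \<notin> B" for t
  proof -
    obtain i where "Suc t \<le> i" "\<omega> \<in> first_occ r (Suc t) i"
      using late by blast
    moreover have "i \<le> slot r i"
      using As_ne by (cases As) auto
    ultimately show ?thesis
      by (auto simp: first_occ_def quiet_def)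
  qed
  ultimately show "\<omega> \<in> never_B \<inter> {\<omega> \<in> space (stream_space M). \<exists>\<^sub>\<infinity>i. occurs_at (slot r i) \<omega>}"
    using space by (auto simp: runs_G_def space_stream_space snth_in)
next
  fix \<omega> assume "\<omega> \<in> never_B \<inter> {\<omega> \<in> space (stream_space M). \<exists>\<^sub>\<infinity>i. occurs_at (slot r i) \<omega>}"
  then have space: "\<omega> \<in> space (stream_space M)" and no_B: "\<forall>t. \<omega> !! t \<notin> B"
    and inf: "\<exists>\<^sub>\<infinity>i. occurs_at (slot r i) \<omega>"
    by (auto simp: runs_G_def)
  show "\<omega> \<in> (\<Inter>m. occ_from r m)"
  proof
    fix m
    obtain i where "m \<le> i" "occurs_at (slot r i) \<omega>"
      using inf by (auto simp: INFM_nat_le)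
    then show "\<omega> \<in> occ_from r m"
      using space no_B by (intro in_occ_from) auto
  qed
qed

lemma emeasure_Inter_occ_from_le:
  assumes \<mu>: "\<mu> \<in> space (prob_algebra M)"
  shows "emeasure (P \<mu>) (\<Inter>m. occ_from r m) \<le> ennreal (1 - p) * emeasure (P \<mu>) (occ_from r m)"
proof -
  have "(\<Inter>m. occ_from r m) \<subseteq> (\<Union>j. first_occ_never_B r m (m + j))"
  proof
    fix \<omega> assume \<omega>: "\<omega> \<in> (\<Inter>m. occ_from r m)"
    then obtain j where "\<omega> \<in> first_occ r m (m + j)"
      by (auto simp: occ_from_def)
    moreover have "\<omega> \<in> never_B"
      using \<omega> unfolding Inter_occ_from_eq by blast
    ultimately have "\<omega> \<in> first_occ_never_B r m (m + j)"
      by (auto simp: first_occ_def first_occ_never_B_def sdrop_in_runs_G)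
    then show "\<omega> \<in> (\<Union>j. first_occ_never_B r m (m + j))"
      by blast
  qed
  then have "emeasure (P \<mu>) (\<Inter>m. occ_from r m) \<le> emeasure (P \<mu>) (\<Union>j. first_occ_never_B r m (m + j))"
    by (rule emeasure_mono) (simp add: sets_path[OF \<mu>])
  also have "\<dots> \<le> (\<Sum>j. emeasure (P \<mu>) (first_occ_never_B r m (m + j)))"
    by (rule emeasure_subadditive_countably) (auto simp: sets_path[OF \<mu>])
  also have "\<dots> \<le> (\<Sum>j. ennreal (1 - p) * emeasure (P \<mu>) (first_occ r m (m + j)))"
    unfolding first_occ_never_B_def first_occ_def
    by (intro suminf_le summableI emeasure_prefix_cyl_never_B_le[OF \<mu>] sets_quiet prefix_determined_quiet)
  also have "\<dots> = ennreal (1 - p) * (\<Sum>j. emeasure (P \<mu>) (first_occ r m (m + j)))"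
    by simp
  also have "(\<Sum>j. emeasure (P \<mu>) (first_occ r m (m + j))) = emeasure (P \<mu>) (occ_from r m)"
    unfolding occ_from_def using disjoint_family_first_occ
    by (intro suminf_emeasure) (auto simp: sets_path[OF \<mu>])
  finally show ?thesis .
qed

lemma emeasure_Inter_occ_from_eq_0:
  assumes \<mu>: "\<mu> \<in> space (prob_algebra M)"
  shows "emeasure (P \<mu>) (\<Inter>m. occ_from r m) = 0"
proof -
  interpret P\<mu>: prob_space "P \<mu>"
    by (rule prob_space_path[OF \<mu>])
  show ?thesis
    using sets_path[OF \<mu>] decseq_occ_from p emeasure_Inter_occ_from_le[OF \<mu>]
    by (intro P\<mu>.emeasure_Inter_decseq_eq_0[where q="1 - p"]) auto
qed

lemma never_B_GF_subset: "never_B \<inter> runs_GF_phi M As \<subseteq> (\<Union>r. \<Inter>m. occ_from r m)"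
proof
  fix \<omega> assume \<omega>: "\<omega> \<in> never_B \<inter> runs_GF_phi M As"
  then have "\<exists>\<^sub>\<infinity>k. occurs_at k \<omega>"
    by (simp add: runs_GF_phi_def occurs_at_def)
  then obtain r where "\<exists>\<^sub>\<infinity>i. occurs_at (slot r i) \<omega>"
    using INFM_arith_progression[of "length As"] As_ne by auto
  then show "\<omega> \<in> (\<Union>r. \<Inter>m. occ_from r m)"
    using \<omega> Inter_occ_from_eq[of r] by (auto simp: runs_GF_phi_def)
qed

lemma emeasure_never_B_GF_eq_0:
  assumes \<mu>: "\<mu> \<in> space (prob_algebra M)"
  shows "emeasure (P \<mu>) (never_B \<inter> runs_GF_phi M As) = 0"
proof -
  have "emeasure (P \<mu>) (never_B \<inter> runs_GF_phi M As) \<le> emeasure (P \<mu>) (\<Union>r. \<Inter>m. occ_from r m)"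
    using sets_path[OF \<mu>] never_B_GF_subset by (intro emeasure_mono) auto
  also have "\<dots> = 0"
    using sets_path[OF \<mu>] emeasure_Inter_occ_from_eq_0[OF \<mu>] by (intro emeasure_UN_eq_0) auto
  finally show ?thesis
    by simp
qed

end

theorem mainTheorem2:
  fixes M :: "'a measure" and K :: "'a \<Rightarrow> 'a measure"
    and P :: "'a measure \<Rightarrow> 'a stream measure"
    and B :: "'a set" and As :: "'a set list" and p :: real
  assumes kernel: "K \<in> M \<rightarrow>\<^sub>M prob_algebra M"
    and path: "is_path_measure M K P"
    and B: "B \<in> sets M"
    and As_ne: "As \<noteq> []" and As: "set As \<subseteq> sets M"
    and p: "p > 0"
    and hyp: "\<forall>\<nu> \<in> space (prob_algebra M). emeasure (P \<nu>) (cyl M As) > 0 \<longrightarrow>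
                 emeasure (P (cond_dist M P As \<nu>)) (runs_F M B) \<ge> ennreal p"
  shows "\<forall>\<mu> \<in> space (prob_algebra M).
           emeasure (P \<mu>) (runs_G M (space M - B) \<inter> runs_GF_phi M As) = 0"
proof -
  interpret sts_uniform_reach M K P B As p
    using kernel path B As_ne As p hyp by unfold_locales
  show ?thesis
    using emeasure_never_B_GF_eq_0 by blast
qed

end
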